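(* Let $(X,\varphi)$ be a Smale space, $(Y,f)$ a finitely presented system, and $\pi:X\to Y$ an almost one-to-one $u$-resolving factor map. Let $P\subseteq Y$ be a finite set of synchronizing periodic points such that $\pi^{-1}(p)$ is a single point for each $p\in P$, and let $Q=\pi^{-1}(P)$. Then for each $y\in Y^u(P)$, $\pi^{-1}(y)=\{x\}$ for some $x\in X^u(Q)$ (i.e. $y$ has a unique preimage under $\pi:X\to Y$, and it lies in $X^u(Q)$).
   Context: Dynamical systems are compact metric spaces with homeomorphisms. Expansive: some $\varepsilon_X>0$ with $d(\varphi^nx,\varphi^ny)\le\varepsilon_X$ for all $n\in\mathbb{Z}$ implying $x=y$. A Smale space is a system equipped with a bracket map satisfying Ruelle's axioms; a finitely presented system is an expansive factor of a shift of finite type. Factor map: continuous surjection intertwining the homeomorphisms. $x\sim_u y$ iff $d(\varphi^{-n}x,\varphi^{-n}y)\to0$ as $n\to\infty$; $X^u(x)$ is the class of $x$ and $X^u(P)=\bigcup_{p\in P}X^u(p)$. $\pi$ is $u$-resolving if it is injective on each $X^u(x)$, almost one-to-one if a residual set of points has a unique preimage. A point $y$ is synchronizing if it has a local product neighbourhood: for some $\delta>0$ the bracket ($[a,b]$ = unique point of $Y^s(a,\varepsilon)\cap Y^u(b,\varepsilon)$, where $Y^s(a,\varepsilon)=\{z:d(f^na,f^nz)<\varepsilon\ \forall n\ge0\}$ and $Y^u$ likewise with $f^{-n}$) maps $Y^u(y,\delta)\times Y^s(y,\delta)$ homeomorphically onto an open neighbourhood of $y$. *)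

theory Defs
  imports "HOL-Analysis.Analysis"
begin

definition dyn_sys :: "'a::metric_space set \<Rightarrow> ('a \<Rightarrow> 'a) \<Rightarrow> bool" where
  "dyn_sys X phi \<longleftrightarrow> compact X \<and> (\<exists>g. homeomorphism X X phi g)"

definition finv :: "'a set \<Rightarrow> ('a \<Rightarrow> 'a) \<Rightarrow> 'a \<Rightarrow> 'a" where
  "finv X phi = inv_into X phi"

definition expansive :: "'a::metric_space set \<Rightarrow> ('a \<Rightarrow> 'a) \<Rightarrow> bool" where
  "expansive X phi \<longleftrightarrow> (\<exists>e>0. \<forall>x\<in>X. \<forall>y\<in>X.
     (\<forall>n::nat. dist ((phi ^^ n) x) ((phi ^^ n) y) \<le> e
             \<and> dist ((finv X phi ^^ n) x) ((finv X phi ^^ n) y) \<le> e) \<longrightarrow> x = y)"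

text \<open>Smale space: Ruelle's axioms for a partially defined bracket (Putnam's presentation).\<close>
definition smale_space :: "'a::metric_space set \<Rightarrow> ('a \<Rightarrow> 'a) \<Rightarrow> bool" where
  "smale_space X phi \<longleftrightarrow> dyn_sys X phi \<and>
    (\<exists>eps>0. \<exists>lam. 0 < lam \<and> lam < 1 \<and> (\<exists>br :: 'a \<Rightarrow> 'a \<Rightarrow> 'a.
      continuous_on {(x, y). x \<in> X \<and> y \<in> X \<and> dist x y \<le> eps} (\<lambda>(x, y). br x y) \<and>
      (\<forall>x\<in>X. \<forall>y\<in>X. dist x y \<le> eps \<longrightarrow> br x y \<in> X) \<and>
      (\<forall>x\<in>X. br x x = x) \<and>
      (\<forall>x\<in>X. \<forall>y\<in>X. \<forall>z\<in>X. dist x y \<le> eps \<longrightarrow> dist y z \<le> eps \<longrightarrow> dist x z \<le> eps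
          \<longrightarrow> dist x (br y z) \<le> eps \<longrightarrow> br x (br y z) = br x z) \<and>
      (\<forall>x\<in>X. \<forall>y\<in>X. \<forall>z\<in>X. dist x y \<le> eps \<longrightarrow> dist y z \<le> eps \<longrightarrow> dist x z \<le> eps
          \<longrightarrow> dist (br x y) z \<le> eps \<longrightarrow> br (br x y) z = br x z) \<and>
      (\<forall>x\<in>X. \<forall>y\<in>X. dist x y \<le> eps \<longrightarrow> dist (phi x) (phi y) \<le> eps
          \<longrightarrow> phi (br x y) = br (phi x) (phi y)) \<and>
      (\<forall>x\<in>X. \<forall>y\<in>X. dist x y \<le> eps \<longrightarrow> br x y = y
          \<longrightarrow> dist (phi x) (phi y) \<le> lam * dist x y) \<and>
      (\<forall>x\<in>X. \<forall>y\<in>X. dist x y \<le> eps \<longrightarrow> br x y = x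
          \<longrightarrow> dist (finv X phi x) (finv X phi y) \<le> lam * dist x y)))"

definition sft :: "nat \<Rightarrow> nat \<Rightarrow> nat list set \<Rightarrow> (int \<Rightarrow> nat) set" where
  "sft n m W = {x. (\<forall>i. x i < n) \<and> (\<forall>i. map (\<lambda>k. x (i + int k)) [0..<m] \<in> W)}"

definition shift :: "(int \<Rightarrow> nat) \<Rightarrow> (int \<Rightarrow> nat)" where
  "shift x = (\<lambda>i. x (i + 1))"

definition shift_top :: "(int \<Rightarrow> nat) topology" where
  "shift_top = product_topology (\<lambda>_. discrete_topology UNIV) UNIV"

definition factor_map :: "'a::metric_space set \<Rightarrow> ('a \<Rightarrow> 'a) \<Rightarrow> 'b::metric_space set \<Rightarrow> ('b \<Rightarrow> 'b)
    \<Rightarrow> ('a \<Rightarrow> 'b) \<Rightarrow> bool" where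
  "factor_map X phi Y f \<pi> \<longleftrightarrow> continuous_on X \<pi> \<and> \<pi> ` X = Y \<and> (\<forall>x\<in>X. \<pi> (phi x) = f (\<pi> x))"

definition finitely_presented :: "'b::metric_space set \<Rightarrow> ('b \<Rightarrow> 'b) \<Rightarrow> bool" where
  "finitely_presented Y f \<longleftrightarrow> dyn_sys Y f \<and> expansive Y f \<and>
     (\<exists>n m W g. continuous_map (subtopology shift_top (sft n m W)) (top_of_set Y) g
        \<and> g ` sft n m W = Y \<and> (\<forall>x\<in>sft n m W. g (shift x) = f (g x)))"

definition unstable_rel :: "'a::metric_space set \<Rightarrow> ('a \<Rightarrow> 'a) \<Rightarrow> 'a \<Rightarrow> 'a \<Rightarrow> bool" where
  "unstable_rel X phi x y \<longleftrightarrow>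
     (\<lambda>n. dist ((finv X phi ^^ n) x) ((finv X phi ^^ n) y)) \<longlonglongrightarrow> 0"

definition unstable_set :: "'a::metric_space set \<Rightarrow> ('a \<Rightarrow> 'a) \<Rightarrow> 'a \<Rightarrow> 'a set" where
  "unstable_set X phi x = {y\<in>X. unstable_rel X phi x y}"

definition unstable_set_of :: "'a::metric_space set \<Rightarrow> ('a \<Rightarrow> 'a) \<Rightarrow> 'a set \<Rightarrow> 'a set" where
  "unstable_set_of X phi P = (\<Union>p\<in>P. unstable_set X phi p)"

definition u_resolving :: "'a::metric_space set \<Rightarrow> ('a \<Rightarrow> 'a) \<Rightarrow> ('a \<Rightarrow> 'b) \<Rightarrow> bool" where
  "u_resolving X phi \<pi> \<longleftrightarrow> (\<forall>x\<in>X. inj_on \<pi> (unstable_set X phi x))"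

definition residual_in :: "'b::metric_space set \<Rightarrow> 'b set \<Rightarrow> bool" where
  "residual_in Y S \<longleftrightarrow> (\<exists>U :: nat \<Rightarrow> 'b set.
     (\<forall>k. openin (top_of_set Y) (U k) \<and> Y \<subseteq> closure (U k)) \<and> Y \<inter> (\<Inter>k. U k) \<subseteq> S)"

definition almost_one_to_one :: "'a set \<Rightarrow> 'b::metric_space set \<Rightarrow> ('a \<Rightarrow> 'b) \<Rightarrow> bool" where
  "almost_one_to_one X Y \<pi> \<longleftrightarrow> residual_in Y {y\<in>Y. \<exists>!x. x \<in> X \<and> \<pi> x = y}"

definition loc_stable :: "'b::metric_space set \<Rightarrow> ('b \<Rightarrow> 'b) \<Rightarrow> 'b \<Rightarrow> real \<Rightarrow> 'b set" where
  "loc_stable Y f a e = {z\<in>Y. \<forall>n::nat. dist ((f ^^ n) a) ((f ^^ n) z) < e}"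

definition loc_unstable :: "'b::metric_space set \<Rightarrow> ('b \<Rightarrow> 'b) \<Rightarrow> 'b \<Rightarrow> real \<Rightarrow> 'b set" where
  "loc_unstable Y f a e = {z\<in>Y. \<forall>n::nat. dist ((finv Y f ^^ n) a) ((finv Y f ^^ n) z) < e}"

definition bracket :: "'b::metric_space set \<Rightarrow> ('b \<Rightarrow> 'b) \<Rightarrow> real \<Rightarrow> 'b \<Rightarrow> 'b \<Rightarrow> 'b" where
  "bracket Y f e a b = (THE z. z \<in> loc_stable Y f a e \<inter> loc_unstable Y f b e)"

definition synchronizing :: "'b::metric_space set \<Rightarrow> ('b \<Rightarrow> 'b) \<Rightarrow> 'b \<Rightarrow> bool" where
  "synchronizing Y f y \<longleftrightarrow> y \<in> Y \<and> (\<exists>e>0. \<exists>\<delta>>0.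
     (\<forall>a\<in>loc_unstable Y f y \<delta>. \<forall>b\<in>loc_stable Y f y \<delta>.
        \<exists>!z. z \<in> loc_stable Y f a e \<inter> loc_unstable Y f b e) \<and>
     (\<exists>U. openin (top_of_set Y) U \<and> y \<in> U \<and>
        (\<exists>g. homeomorphism (loc_unstable Y f y \<delta> \<times> loc_stable Y f y \<delta>) U
               (\<lambda>(a, b). bracket Y f e a b) g)))"

definition periodic_pt :: "'b set \<Rightarrow> ('b \<Rightarrow> 'b) \<Rightarrow> 'b \<Rightarrow> bool" where
  "periodic_pt Y f p \<longleftrightarrow> p \<in> Y \<and> (\<exists>n>0. (f ^^ n) p = p)"

end

theory Submission
  imports Defs
begin

text \<open>
  If \<open>\<pi> x\<close> is unstably asymptotic to a periodic point \<open>p\<close> whose fibre is a single point \<open>q\<close>,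
  then the backward orbit of \<open>x\<close> is asymptotic to that of \<open>q\<close>: the backward orbit of \<open>q\<close> is
  finite and every point on it is the whole fibre over its image, so by compactness points
  of \<open>X\<close> whose images are close to the image of an orbit point are themselves close to it.
  Hence every preimage of \<open>y \<in> Y\<^sup>u(p)\<close> lies in \<open>X\<^sup>u(q)\<close>, on which \<open>\<pi>\<close> is injective.
\<close>

lemma dyn_sys_homeomorphism_finv:
  assumes "dyn_sys X phi"
  shows "homeomorphism X X phi (finv X phi)"
proof -
  obtain g where g: "homeomorphism X X phi g"
    using assms unfolding dyn_sys_def by blast
  have "inj_on phi X"
    using g by (metis homeomorphism_apply1 inj_on_inverseI)
  then have "finv X phi y = g y" if "y \<in> X" for y
    unfolding finv_def using g that
    by (metis homeomorphism_apply2 homeomorphism_image2 image_eqI inv_into_f_eq)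
  then show ?thesis
    using homeomorphism_cong[OF g] by blast
qed

lemma dyn_sys_homeomorphism_funpow:
  assumes "dyn_sys X phi"
  shows "homeomorphism X X (phi ^^ n) (finv X phi ^^ n)"
proof (induction n)
  case 0
  show ?case by (simp add: homeomorphism_ident)
next
  case (Suc n)
  from homeomorphism_compose[OF Suc.IH dyn_sys_homeomorphism_finv[OF assms]]
  show ?case by (metis funpow.simps(2) funpow_Suc_right)
qed

lemma factor_map_funpow:
  assumes "dyn_sys X phi" "factor_map X phi Y f \<pi>" "x \<in> X"
  shows "\<pi> ((phi ^^ n) x) = (f ^^ n) (\<pi> x)"
proof (induction n)
  case (Suc n)
  have "(phi ^^ n) x \<in> X"
    using homeomorphism_image1[OF dyn_sys_homeomorphism_funpow[OF assms(1)]] assms(3) by blast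
  with Suc assms(2) show ?case unfolding factor_map_def by simp
qed simp

lemma factor_map_finv_funpow:
  assumes dX: "dyn_sys X phi" and dY: "dyn_sys Y f" and fm: "factor_map X phi Y f \<pi>"
    and "x \<in> X"
  shows "\<pi> ((finv X phi ^^ n) x) = (finv Y f ^^ n) (\<pi> x)"
proof -
  let ?z = "(finv X phi ^^ n) x"
  have hX: "homeomorphism X X (phi ^^ n) (finv X phi ^^ n)"
    using dyn_sys_homeomorphism_funpow[OF dX] .
  have "?z \<in> X"
    using homeomorphism_image2[OF hX] \<open>x \<in> X\<close> by blast
  then have "\<pi> ?z \<in> Y"
    using fm unfolding factor_map_def by blast
  have "(finv Y f ^^ n) (\<pi> x) = (finv Y f ^^ n) (\<pi> ((phi ^^ n) ?z))"
    using homeomorphism_apply2[OF hX \<open>x \<in> X\<close>] by simp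
  also have "\<dots> = (finv Y f ^^ n) ((f ^^ n) (\<pi> ?z))"
    using factor_map_funpow[OF dX fm \<open>?z \<in> X\<close>] by simp
  also have "\<dots> = \<pi> ?z"
    using homeomorphism_apply1[OF dyn_sys_homeomorphism_funpow[OF dY] \<open>\<pi> ?z \<in> Y\<close>] .
  finally show ?thesis by simp
qed

lemma singleton_fibre_finv_funpow:
  assumes dX: "dyn_sys X phi" and dY: "dyn_sys Y f" and fm: "factor_map X phi Y f \<pi>"
    and fibre: "{x \<in> X. \<pi> x = p} = {q}"
  shows "{x \<in> X. \<pi> x = (finv Y f ^^ n) p} = {(finv X phi ^^ n) q}"
proof -
  have q: "q \<in> X" "\<pi> q = p"
    using fibre by auto
  then have "p \<in> Y"
    using fm unfolding factor_map_def by blast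
  have hX: "homeomorphism X X (phi ^^ n) (finv X phi ^^ n)"
    using dyn_sys_homeomorphism_funpow[OF dX] .
  have "a = (finv X phi ^^ n) q" if "a \<in> X" "\<pi> a = (finv Y f ^^ n) p" for a
  proof -
    have "\<pi> ((phi ^^ n) a) = (f ^^ n) ((finv Y f ^^ n) p)"
      using factor_map_funpow[OF dX fm \<open>a \<in> X\<close>] that(2) by simp
    also have "\<dots> = p"
      using homeomorphism_apply2[OF dyn_sys_homeomorphism_funpow[OF dY] \<open>p \<in> Y\<close>] .
    finally have "\<pi> ((phi ^^ n) a) = p" .
    then have "(phi ^^ n) a = q"
      using fibre homeomorphism_image1[OF hX] \<open>a \<in> X\<close> by blast
    then show ?thesis
      using homeomorphism_apply1[OF hX \<open>a \<in> X\<close>] by simp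
  qed
  moreover have "(finv X phi ^^ n) q \<in> X"
    using homeomorphism_image2[OF hX] q(1) by blast
  ultimately show ?thesis
    using factor_map_finv_funpow[OF dX dY fm q(1)] q(2) by blast
qed

lemma singleton_fibres_uniformly_separated:
  fixes \<pi> :: "'a::metric_space \<Rightarrow> 'b::metric_space"
  assumes "compact X" "continuous_on X \<pi>" "compact F"
    and fibres: "\<And>b. b \<in> F \<Longrightarrow> {a \<in> X. \<pi> a = \<pi> b} = {b}" and "e > 0"
  obtains \<delta> where "\<delta> > 0" "\<And>a b. b \<in> F \<Longrightarrow> a \<in> X \<Longrightarrow> dist (\<pi> b) (\<pi> a) < \<delta> \<Longrightarrow> dist b a < e"
proof -
  define K where "K = (F \<times> X) \<inter> {z. e \<le> dist (fst z) (snd z)}"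
  define d where "d = (\<lambda>z. dist (\<pi> (fst z)) (\<pi> (snd z)))"
  have "F \<subseteq> X"
    using fibres by blast
  have "compact K"
    unfolding K_def
    by (intro compact_Int_closed compact_Times assms closed_Collect_le continuous_intros)
  have "continuous_on K d"
    unfolding d_def K_def using \<open>F \<subseteq> X\<close>
    by (intro continuous_intros continuous_on_compose2[OF assms(2)]) auto
  have d_pos: "d z > 0" if "z \<in> K" for z
    using that fibres \<open>e > 0\<close> unfolding K_def d_def by force
  show ?thesis
  proof (cases "K = {}")
    case True
    then show ?thesis
      using that[of 1] unfolding K_def by force
  next
    case False
    then obtain z where "z \<in> K" "\<forall>w\<in>K. d z \<le> d w"
      using continuous_attains_inf[OF \<open>compact K\<close> _ \<open>continuous_on K d\<close>] by blast
    then show ?thesis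
      using that[of "d z"] d_pos unfolding K_def d_def by force
  qed
qed

lemma tendsto_dist_if_singleton_fibres:
  fixes \<pi> :: "'a::metric_space \<Rightarrow> 'b::metric_space"
  assumes "compact X" "continuous_on X \<pi>" "compact F"
    and "\<And>b. b \<in> F \<Longrightarrow> {a \<in> X. \<pi> a = \<pi> b} = {b}"
    and "\<And>n. q n \<in> F" "\<And>n. x n \<in> X"
    and lim: "(\<lambda>n. dist (\<pi> (q n)) (\<pi> (x n))) \<longlonglongrightarrow> 0"
  shows "(\<lambda>n. dist (q n) (x n)) \<longlonglongrightarrow> 0"
  unfolding tendsto_iff
proof (intro allI impI)
  fix e :: real
  assume "e > 0"
  obtain \<delta> where "\<delta> > 0"
    and sep: "\<And>a b. b \<in> F \<Longrightarrow> a \<in> X \<Longrightarrow> dist (\<pi> b) (\<pi> a) < \<delta> \<Longrightarrow> dist b a < e"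
    using singleton_fibres_uniformly_separated[OF assms(1-4) \<open>e > 0\<close>] by blast
  have "eventually (\<lambda>n. dist (\<pi> (q n)) (\<pi> (x n)) < \<delta>) sequentially"
    using lim \<open>\<delta> > 0\<close> unfolding tendsto_iff by simp
  then show "eventually (\<lambda>n. dist (dist (q n) (x n)) 0 < e) sequentially"
    by eventually_elim (simp add: sep assms(5,6))
qed

lemma unstable_rel_lift_periodic:
  assumes dX: "dyn_sys X phi" and dY: "dyn_sys Y f" and fm: "factor_map X phi Y f \<pi>"
    and fibre: "{x \<in> X. \<pi> x = p} = {q}" and "(f ^^ N) p = p" "N > 0"
    and "x \<in> X" and "unstable_rel Y f p (\<pi> x)"
  shows "unstable_rel X phi q x"
proof -
  let ?s = "finv X phi" and ?g = "finv Y f"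
  have q: "q \<in> X" "\<pi> q = p"
    using fibre by auto
  have "p \<in> Y"
    using fm q unfolding factor_map_def by blast
  have orbit_fibre: "{a \<in> X. \<pi> a = (?g ^^ n) p} = {(?s ^^ n) q}" for n
    using singleton_fibre_finv_funpow[OF dX dY fm fibre] .
  have "(?g ^^ N) p = p"
    using homeomorphism_apply1[OF dyn_sys_homeomorphism_funpow[OF dY] \<open>p \<in> Y\<close>, of N]
      \<open>(f ^^ N) p = p\<close> by simp
  then have "(?s ^^ N) q = q"
    using orbit_fibre[of N] fibre by simp
  define F where "F = (\<lambda>r. (?s ^^ r) q) ` {..<N}"
  have orbit_in_F: "(?s ^^ n) q \<in> F" for n
  proof -
    have "(?s ^^ n) q = (?s ^^ (n mod N)) q"
      using funpow_mod_eq[OF \<open>(?s ^^ N) q = q\<close>] by simp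
    moreover have "n mod N < N"
      using \<open>N > 0\<close> by simp
    ultimately show ?thesis
      unfolding F_def by blast
  qed
  have fibres_F: "{a \<in> X. \<pi> a = \<pi> b} = {b}" if "b \<in> F" for b
  proof -
    obtain r where "b = (?s ^^ r) q"
      using \<open>b \<in> F\<close> unfolding F_def by blast
    then show ?thesis
      using orbit_fibre[of r] factor_map_finv_funpow[OF dX dY fm q(1), of r] q(2) by simp
  qed
  have lim_image: "(\<lambda>n. dist (\<pi> ((?s ^^ n) q)) (\<pi> ((?s ^^ n) x))) \<longlonglongrightarrow> 0"
    using \<open>unstable_rel Y f p (\<pi> x)\<close>
    unfolding unstable_rel_def factor_map_finv_funpow[OF dX dY fm q(1)]
      factor_map_finv_funpow[OF dX dY fm \<open>x \<in> X\<close>] q(2) .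
  have "compact X"
    using dX unfolding dyn_sys_def by (rule conjunct1)
  have "continuous_on X \<pi>"
    using fm unfolding factor_map_def by (rule conjunct1)
  have "compact F"
    unfolding F_def by (intro finite_imp_compact finite_imageI finite_lessThan)
  have orbit_x_in_X: "(?s ^^ n) x \<in> X" for n
    using homeomorphism_image2[OF dyn_sys_homeomorphism_funpow[OF dX]] \<open>x \<in> X\<close> by blast
  show ?thesis
    unfolding unstable_rel_def
    using tendsto_dist_if_singleton_fibres[where q = "\<lambda>n. (?s ^^ n) q" and x = "\<lambda>n. (?s ^^ n) x",
        OF \<open>compact X\<close> \<open>continuous_on X \<pi>\<close> \<open>compact F\<close> fibres_F orbit_in_F orbit_x_in_X lim_image] .
qed

theorem mainTheorem3:
  fixes X :: "'a::metric_space set" and phi :: "'a \<Rightarrow> 'a"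
    and Y :: "'b::metric_space set" and f :: "'b \<Rightarrow> 'b"
    and \<pi> :: "'a \<Rightarrow> 'b" and P :: "'b set"
  assumes "smale_space X phi"
    and "finitely_presented Y f"
    and "factor_map X phi Y f \<pi>"
    and "almost_one_to_one X Y \<pi>"
    and "u_resolving X phi \<pi>"
    and "finite P" and "P \<subseteq> Y"
    and "\<forall>p\<in>P. synchronizing Y f p \<and> periodic_pt Y f p"
    and "\<forall>p\<in>P. \<exists>x. {x'\<in>X. \<pi> x' = p} = {x}"
  shows "\<forall>y\<in>unstable_set_of Y f P.
           \<exists>x\<in>unstable_set_of X phi {x\<in>X. \<pi> x \<in> P}. {x'\<in>X. \<pi> x' = y} = {x}"
proof
  fix y
  assume "y \<in> unstable_set_of Y f P"
  then obtain p where "p \<in> P" "y \<in> Y" "unstable_rel Y f p y"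
    unfolding unstable_set_of_def unstable_set_def by auto
  obtain q where fibre: "{x \<in> X. \<pi> x = p} = {q}"
    using assms(9) \<open>p \<in> P\<close> by blast
  obtain N where "N > 0" "(f ^^ N) p = p"
    using assms(8) \<open>p \<in> P\<close> unfolding periodic_pt_def by blast
  have dX: "dyn_sys X phi"
    using assms(1) unfolding smale_space_def by (rule conjunct1)
  have dY: "dyn_sys Y f"
    using assms(2) unfolding finitely_presented_def by (rule conjunct1)
  have preimages_unstable: "x \<in> unstable_set X phi q" if "x \<in> X" "\<pi> x = y" for x
    using unstable_rel_lift_periodic[OF dX dY assms(3) fibre \<open>(f ^^ N) p = p\<close> \<open>N > 0\<close> \<open>x \<in> X\<close>]
      \<open>unstable_rel Y f p y\<close> that unfolding unstable_set_def by simp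
  obtain x where x: "x \<in> X" "\<pi> x = y"
    using assms(3) \<open>y \<in> Y\<close> unfolding factor_map_def by blast
  have "q \<in> {x \<in> X. \<pi> x \<in> P}" and "inj_on \<pi> (unstable_set X phi q)"
    using fibre \<open>p \<in> P\<close> assms(5) unfolding u_resolving_def by auto
  then show "\<exists>x\<in>unstable_set_of X phi {x \<in> X. \<pi> x \<in> P}. {x' \<in> X. \<pi> x' = y} = {x}"
    using preimages_unstable x unfolding unstable_set_of_def inj_on_def by blast
qed

end
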